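(* Let $\beta_1<\beta_2<\alpha_1<\alpha_2$ be reals and $C_{\alpha_1},C_{\alpha_2},C_{\beta_1},C_{\beta_2}$ nonzero reals. There exist polynomials $A(x)=\sum_{k=0}^4A_kx^{4-k}$ and $B(y)=\sum_{k=0}^4B_ky^{4-k}$ of degree at most $4$ such that $A(\alpha_i)=0$, $B(\beta_i)=0$, $A'(\alpha_i)=2/C_{\alpha_i}$, $B'(\beta_i)=-2/C_{\beta_i}$ ($i=1,2$) and $A_0=-B_0$, $A_1=-B_1$, $A_2=-B_2$, if and only if $$\frac{(\alpha_1+\alpha_2)^2+2\alpha_2^2+(\beta_1+\beta_2)^2+2\beta_1\beta_2-2(2\alpha_2+\alpha_1)(\beta_1+\beta_2)}{(\alpha_2-\alpha_1)^2C_{\alpha_1}}+\frac{(\alpha_1+\alpha_2)^2+2\alpha_1^2+(\beta_1+\beta_2)^2+2\beta_1\beta_2-2(2\alpha_1+\alpha_2)(\beta_1+\beta_2)}{(\alpha_2-\alpha_1)^2C_{\alpha_2}}$$ $$+\frac{(\beta_1+\beta_2)^2+2\beta_2^2+(\alpha_1+\alpha_2)^2+2\alpha_1\alpha_2-2(2\beta_2+\beta_1)(\alpha_1+\alpha_2)}{(\beta_2-\beta_1)^2C_{\beta_1}}+\frac{(\beta_1+\beta_2)^2+2\beta_1^2+(\alpha_1+\alpha_2)^2+2\alpha_1\alpha_2-2(2\beta_1+\beta_2)(\alpha_1+\alpha_2)}{(\beta_2-\beta_1)^2C_{\beta_2}}=0.$$ In this case $A$ and $B$ are uniquely determined. They have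 $A_0=0$ if and only if $$\frac1{(\alpha_2-\alpha_1)^2}\Big(\frac1{C_{\alpha_1}}+\frac1{C_{\alpha_2}}\Big)=\frac1{(\beta_2-\beta_1)^2}\Big(\frac1{C_{\beta_1}}+\frac1{C_{\beta_2}}\Big),$$ and, when both previous equations hold, they satisfy $A_0=0$ and $A_3=-B_3$ if additionally $$\frac1{(\alpha_2-\alpha_1)^2}\Big(\frac{\alpha_2(2\alpha_1+\alpha_2)}{C_{\alpha_1}}+\frac{\alpha_1(2\alpha_2+\alpha_1)}{C_{\alpha_2}}\Big)=\frac1{(\beta_2-\beta_1)^2}\Big(\frac{\beta_2(2\beta_1+\beta_2)}{C_{\beta_1}}+\frac{\beta_1(2\beta_2+\beta_1)}{C_{\beta_2}}\Big).$$ *)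

theory Defs
  imports "HOL-Computational_Algebra.Polynomial"
begin

text \<open>A polynomial A(x) = sum_{k=0}^4 A_k x^(4-k) of degree at most 4 is a real poly
  with degree at most 4; its paper coefficient A_k is coeff A (4 - k).\<close>

definition AB_conditions ::
  "real \<Rightarrow> real \<Rightarrow> real \<Rightarrow> real \<Rightarrow> real \<Rightarrow> real \<Rightarrow> real \<Rightarrow> real \<Rightarrow> real poly \<Rightarrow> real poly \<Rightarrow> bool"
  where
  "AB_conditions a1 a2 b1 b2 Ca1 Ca2 Cb1 Cb2 A B \<longleftrightarrow>
     degree A \<le> 4 \<and> degree B \<le> 4 \<and>
     poly A a1 = 0 \<and> poly A a2 = 0 \<and> poly B b1 = 0 \<and> poly B b2 = 0 \<and>
     poly (pderiv A) a1 = 2 / Ca1 \<and> poly (pderiv A) a2 = 2 / Ca2 \<and>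
     poly (pderiv B) b1 = - 2 / Cb1 \<and> poly (pderiv B) b2 = - 2 / Cb2 \<and>
     coeff A 4 = - coeff B 4 \<and> coeff A 3 = - coeff B 3 \<and> coeff A 2 = - coeff B 2"

end

theory Submission
  imports Defs
begin

text \<open>
  Both \<open>A\<close> and \<open>B\<close> solve a Hermite interpolation problem: a polynomial of degree at
  most 4 with zeros at two given points and prescribed derivatives there.
  Such a polynomial is \<open>(x - a1)(x - a2)(s (x - a1)(x - a2) + m x + l)\<close>, where
  the line \<open>m x + l\<close> is determined by the derivatives and the leading coefficient \<open>s\<close>
  is free; uniqueness holds because a nonzero polynomial with two double roots has
  degree at least 4.  Matching the three top coefficients of \<open>A\<close> and \<open>-B\<close> then becomes
  a linear system in the two leading coefficients: the \<open>x\<^sup>4\<close>- and \<open>x\<^sup>3\<close>-equations fix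
  them uniquely (the root sums differ since \<open>\<beta>1 < \<beta>2 < \<alpha>1 < \<alpha>2\<close>), and the
  \<open>x\<^sup>2\<close>-equation is then equivalent to the vanishing of the expression \<open>E\<close>.
\<close>

lemma double_root_order:
  fixes p :: "'a::field_char_0 poly"
  assumes "p \<noteq> 0" "poly p a = 0" "poly (pderiv p) a = 0"
  shows "2 \<le> order a p"
proof -
  have "pderiv p \<noteq> 0"
    using assms pderiv_iszero by force
  then have "order a (pderiv p) \<noteq> 0"
    using assms(3) order_root by blast
  then show ?thesis
    using order_pderiv[OF assms(1,2)] by simp
qed

text \<open>Counting roots with multiplicity: a nonzero polynomial with two distinct
  double roots has degree at least four.  This gives uniqueness of Hermite interpolation.\<close>

lemma two_double_roots_degree:
  fixes p :: "'a::field_char_0 poly"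
  assumes "p \<noteq> 0" "a \<noteq> b"
    and "poly p a = 0" "poly (pderiv p) a = 0"
    and "poly p b = 0" "poly (pderiv p) b = 0"
  shows "4 \<le> degree p"
proof -
  have "4 \<le> order a p + order b p"
    using double_root_order[of p a] double_root_order[of p b] assms by simp
  also have "\<dots> = (\<Sum>x\<in>{a, b}. order x p)"
    using assms(2) by simp
  also have "\<dots> \<le> (\<Sum>x | poly p x = 0. order x p)"
    by (rule sum_mono2) (use assms poly_roots_finite in auto)
  also have "\<dots> \<le> degree p"
    by (rule sum_order_le_degree[OF assms(1)])
  finally show ?thesis .
qed

text \<open>The monic quadratic \<open>(x - a1)(x - a2)\<close> and the Hermite quartic: every
  polynomial of degree at most 4 vanishing at \<open>a1, a2\<close> is \<open>(x - a1)(x - a2) Q(x)\<close>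
  with \<open>Q\<close> quadratic; writing \<open>Q = s (x - a1)(x - a2) + m x + l\<close>, the prescribed
  derivatives \<open>g1, g2\<close> at \<open>a1, a2\<close> fix the line \<open>m x + l\<close> and leave the leading
  coefficient \<open>s\<close> free.\<close>

definition root_quadratic :: "'a::comm_ring_1 \<Rightarrow> 'a \<Rightarrow> 'a poly" where
  "root_quadratic a1 a2 = [:-a1, 1:] * [:-a2, 1:]"

definition hermite_slope :: "'a::field \<Rightarrow> 'a \<Rightarrow> 'a \<Rightarrow> 'a \<Rightarrow> 'a" where
  "hermite_slope a1 a2 g1 g2 = (g1 + g2) / (a2 - a1)^2"

definition hermite_offset :: "'a::field \<Rightarrow> 'a \<Rightarrow> 'a \<Rightarrow> 'a \<Rightarrow> 'a" where
  "hermite_offset a1 a2 g1 g2 = - (a2 * g1 + a1 * g2) / (a2 - a1)^2"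

definition hermite_quartic :: "'a::field \<Rightarrow> 'a \<Rightarrow> 'a \<Rightarrow> 'a \<Rightarrow> 'a \<Rightarrow> 'a poly" where
  "hermite_quartic a1 a2 g1 g2 s = root_quadratic a1 a2 *
     (smult s (root_quadratic a1 a2) + [:hermite_offset a1 a2 g1 g2, hermite_slope a1 a2 g1 g2:])"

lemma hermite_quartic_coeffs:
  fixes a1 a2 g1 g2 s :: "'a::field"
  defines "H \<equiv> hermite_quartic a1 a2 g1 g2 s"
    and "m \<equiv> hermite_slope a1 a2 g1 g2" and "l \<equiv> hermite_offset a1 a2 g1 g2"
  shows "degree H \<le> 4" "coeff H 4 = s" "coeff H 3 = m - 2 * (a1 + a2) * s"
    "coeff H 2 = ((a1 + a2)^2 + 2 * a1 * a2) * s + l - (a1 + a2) * m"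
    "coeff H 1 = a1 * a2 * m - (a1 + a2) * l - 2 * (a1 + a2) * a1 * a2 * s"
  unfolding H_def m_def l_def hermite_quartic_def root_quadratic_def
  by (simp_all add: numeral_eq_Suc algebra_simps power2_eq_square degree_mult_le)

text \<open>The line \<open>m x + l\<close> is chosen so that \<open>(x - a1)(x - a2)(m x + l)\<close> has
  derivative \<open>g1\<close> at \<open>a1\<close> and \<open>g2\<close> at \<open>a2\<close>.\<close>

lemma hermite_slope_offset:
  fixes a1 a2 g1 g2 :: "'a::field"
  assumes "a1 \<noteq> a2"
  defines "m \<equiv> hermite_slope a1 a2 g1 g2" and "l \<equiv> hermite_offset a1 a2 g1 g2"
  shows "(a1 - a2) * (m * a1 + l) = g1" "(a2 - a1) * (m * a2 + l) = g2"
proof -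
  have d: "a1 - a2 \<noteq> 0" "a2 - a1 \<noteq> 0" using assms by simp_all
  have "m * a1 + l = g1 * (a1 - a2) / (a1 - a2)^2"
    unfolding m_def l_def hermite_slope_def hermite_offset_def
    by (simp add: power2_commute divide_simps) (simp add: algebra_simps)
  then show "(a1 - a2) * (m * a1 + l) = g1"
    using d by (simp add: power2_eq_square)
  have "m * a2 + l = g2 * (a2 - a1) / (a2 - a1)^2"
    unfolding m_def l_def hermite_slope_def hermite_offset_def
    by (simp add: divide_simps) (simp add: algebra_simps)
  then show "(a2 - a1) * (m * a2 + l) = g2"
    using d by (simp add: power2_eq_square)
qed

lemma hermite_quartic_interpolates:
  fixes a1 a2 g1 g2 s :: "'a::field"
  assumes "a1 \<noteq> a2"
  defines "H \<equiv> hermite_quartic a1 a2 g1 g2 s"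
  shows "poly H a1 = 0" "poly H a2 = 0"
    "poly (pderiv H) a1 = g1" "poly (pderiv H) a2 = g2"
  using hermite_slope_offset[OF assms(1), of g1 g2]
  unfolding H_def hermite_quartic_def root_quadratic_def
  by (simp_all add: pderiv_mult pderiv_pCons algebra_simps)

text \<open>Uniqueness: an interpolating polynomial of degree at most 4 is the Hermite
  quartic with its own leading coefficient, since the difference has degree at most 3
  and two double roots.\<close>

lemma hermite_quartic_unique:
  fixes A :: "'a::field_char_0 poly"
  assumes "a1 \<noteq> a2" "degree A \<le> 4"
    and "poly A a1 = 0" "poly A a2 = 0"
    and "poly (pderiv A) a1 = g1" "poly (pderiv A) a2 = g2"
  shows "A = hermite_quartic a1 a2 g1 g2 (coeff A 4)"
proof (rule ccontr)
  define D where "D = A - hermite_quartic a1 a2 g1 g2 (coeff A 4)"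
  assume "A \<noteq> hermite_quartic a1 a2 g1 g2 (coeff A 4)"
  then have "D \<noteq> 0" unfolding D_def by simp
  have "degree D \<le> 4"
    unfolding D_def using assms(2) hermite_quartic_coeffs(1) degree_diff_le by blast
  moreover have "coeff D 4 = 0"
    unfolding D_def by (simp add: hermite_quartic_coeffs(2))
  ultimately have "degree D < 4"
    using \<open>D \<noteq> 0\<close> leading_coeff_0_iff by (metis le_neq_implies_less)
  moreover have "4 \<le> degree D"
    using two_double_roots_degree[OF \<open>D \<noteq> 0\<close> assms(1)] assms
      hermite_quartic_interpolates[OF assms(1)]
    unfolding D_def by (simp add: pderiv_diff)
  ultimately show False by simp
qed

lemma hermite_quartic_iff:
  fixes A :: "'a::field_char_0 poly"
  assumes "a1 \<noteq> a2"
  shows "(degree A \<le> 4 \<and> poly A a1 = 0 \<and> poly A a2 = 0 \<and>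
          poly (pderiv A) a1 = g1 \<and> poly (pderiv A) a2 = g2)
     \<longleftrightarrow> A = hermite_quartic a1 a2 g1 g2 (coeff A 4)"
  using hermite_quartic_unique[OF assms] hermite_quartic_interpolates[OF assms]
    hermite_quartic_coeffs(1) by metis

lemma matching_cubic_coeff:
  fixes a1 a2 b1 b2 g1 g2 h1 h2 s :: "'a::field_char_0"
  assumes "a1 + a2 \<noteq> b1 + b2"
  shows "coeff (hermite_quartic a1 a2 g1 g2 s) 3 = - coeff (hermite_quartic b1 b2 h1 h2 (-s)) 3
     \<longleftrightarrow> s = (hermite_slope a1 a2 g1 g2 + hermite_slope b1 b2 h1 h2) / (2 * ((a1 + a2) - (b1 + b2)))"
proof -
  have "(a1 + a2) - (b1 + b2) \<noteq> 0" using assms by simp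
  then have "2 * ((a1 + a2) - (b1 + b2)) \<noteq> 0" by (metis mult_eq_0_iff zero_neq_numeral)
  moreover have "coeff (hermite_quartic a1 a2 g1 g2 s) 3 = - coeff (hermite_quartic b1 b2 h1 h2 (-s)) 3
     \<longleftrightarrow> hermite_slope a1 a2 g1 g2 + hermite_slope b1 b2 h1 h2 = s * (2 * ((a1 + a2) - (b1 + b2)))"
    by (simp add: hermite_quartic_coeffs algebra_simps)
  ultimately show ?thesis by (auto simp: eq_divide_eq)
qed

lemma hermite_quartic_linear_coeff:
  fixes a1 a2 g1 g2 :: "'a::field"
  shows "coeff (hermite_quartic a1 a2 g1 g2 0) 1
           = (a2 * (2 * a1 + a2) * g1 + a1 * (2 * a2 + a1) * g2) / (a2 - a1)^2"
proof -
  have "coeff (hermite_quartic a1 a2 g1 g2 0) 1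
      = a1 * a2 * hermite_slope a1 a2 g1 g2 - (a1 + a2) * hermite_offset a1 a2 g1 g2"
    using hermite_quartic_coeffs(5)[of a1 a2 g1 g2 0] by simp
  also have "\<dots> = (a1 * a2 * (g1 + g2) + (a1 + a2) * (a2 * g1 + a1 * g2)) / (a2 - a1)^2"
    unfolding hermite_slope_def hermite_offset_def by (simp add: divide_inverse algebra_simps)
  also have "\<dots> = (a2 * (2 * a1 + a2) * g1 + a1 * (2 * a2 + a1) * g2) / (a2 - a1)^2"
    by (simp add: algebra_simps)
  finally show ?thesis .
qed

text \<open>In the setting of the theorem (\<open>g = 2/C\<close> at the \<open>\<alpha>\<close>'s and \<open>g = -2/C\<close> at the
  \<open>\<beta>\<close>'s) the leading coefficient forced by \<open>matching_cubic_coeff\<close> and the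
  expression of the theorem whose vanishing is the remaining compatibility condition.\<close>

definition shared_leading_coeff ::
  "real \<Rightarrow> real \<Rightarrow> real \<Rightarrow> real \<Rightarrow> real \<Rightarrow> real \<Rightarrow> real \<Rightarrow> real \<Rightarrow> real" where
  "shared_leading_coeff a1 a2 b1 b2 Ca1 Ca2 Cb1 Cb2 =
     (hermite_slope a1 a2 (2 / Ca1) (2 / Ca2) + hermite_slope b1 b2 (- 2 / Cb1) (- 2 / Cb2))
       / (2 * ((a1 + a2) - (b1 + b2)))"

definition compatibility_defect ::
  "real \<Rightarrow> real \<Rightarrow> real \<Rightarrow> real \<Rightarrow> real \<Rightarrow> real \<Rightarrow> real \<Rightarrow> real \<Rightarrow> real" where
  "compatibility_defect a1 a2 b1 b2 Ca1 Ca2 Cb1 Cb2 =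
      ((a1 + a2)^2 + 2 * a2^2 + (b1 + b2)^2 + 2 * b1 * b2 - 2 * (2 * a2 + a1) * (b1 + b2))
        / ((a2 - a1)^2 * Ca1)
    + ((a1 + a2)^2 + 2 * a1^2 + (b1 + b2)^2 + 2 * b1 * b2 - 2 * (2 * a1 + a2) * (b1 + b2))
        / ((a2 - a1)^2 * Ca2)
    + ((b1 + b2)^2 + 2 * b2^2 + (a1 + a2)^2 + 2 * a1 * a2 - 2 * (2 * b2 + b1) * (a1 + a2))
        / ((b2 - b1)^2 * Cb1)
    + ((b1 + b2)^2 + 2 * b1^2 + (a1 + a2)^2 + 2 * a1 * a2 - 2 * (2 * b1 + b2) * (a1 + a2))
        / ((b2 - b1)^2 * Cb2)"

text \<open>Key computation: with that leading coefficient, the \<open>x\<^sup>2\<close>-coefficients are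
  opposite exactly when the compatibility expression vanishes; indeed the root-sum
  difference times the sum of the two \<open>x\<^sup>2\<close>-coefficients equals minus that expression.\<close>

lemma matching_quadratic_coeff:
  fixes a1 a2 b1 b2 Ca1 Ca2 Cb1 Cb2 :: real
  assumes "a1 + a2 \<noteq> b1 + b2"
  defines "s \<equiv> shared_leading_coeff a1 a2 b1 b2 Ca1 Ca2 Cb1 Cb2"
  shows "coeff (hermite_quartic a1 a2 (2 / Ca1) (2 / Ca2) s) 2
           = - coeff (hermite_quartic b1 b2 (- 2 / Cb1) (- 2 / Cb2) (- s)) 2
         \<longleftrightarrow> compatibility_defect a1 a2 b1 b2 Ca1 Ca2 Cb1 Cb2 = 0"
proof -
  define d where "d = (a1 + a2) - (b1 + b2)"
  define ma mb la lb where slope_offset: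
    "ma = hermite_slope a1 a2 (2 / Ca1) (2 / Ca2)" "mb = hermite_slope b1 b2 (- 2 / Cb1) (- 2 / Cb2)"
    "la = hermite_offset a1 a2 (2 / Ca1) (2 / Ca2)" "lb = hermite_offset b1 b2 (- 2 / Cb1) (- 2 / Cb2)"
  define w1 w2 w3 w4 where w: "w1 = 1 / Ca1" "w2 = 1 / Ca2" "w3 = 1 / Cb1" "w4 = 1 / Cb2"
  define ia ib where i: "ia = 1 / (a2 - a1)^2" "ib = 1 / (b2 - b1)^2"
  have "d \<noteq> 0" using assms(1) unfolding d_def by simp
  moreover have "s = (ma + mb) / (2 * d)"
    unfolding s_def shared_leading_coeff_def slope_offset d_def ..
  ultimately have ds: "d * s = (ma + mb) / 2" by simp
  have slopes: "ma = 2 * (w1 + w2) * ia" "mb = - 2 * (w3 + w4) * ib"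
    unfolding slope_offset hermite_slope_def w i by simp_all
  have offsets: "la = - 2 * (a2 * w1 + a1 * w2) * ia" "lb = 2 * (b2 * w3 + b1 * w4) * ib"
    unfolding slope_offset hermite_offset_def w i by (simp_all add: field_simps)
  have terms: "X / ((a2 - a1)^2 * Ca1) = X * w1 * ia" "X / ((a2 - a1)^2 * Ca2) = X * w2 * ia"
    "X / ((b2 - b1)^2 * Cb1) = X * w3 * ib" "X / ((b2 - b1)^2 * Cb2) = X * w4 * ib" for X
    unfolding w i by simp_all
  have "d * (coeff (hermite_quartic a1 a2 (2 / Ca1) (2 / Ca2) s) 2
             + coeff (hermite_quartic b1 b2 (- 2 / Cb1) (- 2 / Cb2) (- s)) 2)
      = ((a1 + a2)^2 + 2 * a1 * a2 - (b1 + b2)^2 - 2 * b1 * b2) * (d * s)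
        + d * (la - (a1 + a2) * ma + lb - (b1 + b2) * mb)"
    unfolding hermite_quartic_coeffs slope_offset by (simp add: algebra_simps)
  also have "\<dots> = - compatibility_defect a1 a2 b1 b2 Ca1 Ca2 Cb1 Cb2"
    unfolding ds unfolding slopes offsets compatibility_defect_def terms d_def by algebra
  finally show ?thesis
    using \<open>d \<noteq> 0\<close> by (auto simp: add_eq_0_iff)
qed

lemma AB_conditions_hermite:
  assumes "a1 \<noteq> a2" "b1 \<noteq> b2"
  shows "AB_conditions a1 a2 b1 b2 Ca1 Ca2 Cb1 Cb2 A B \<longleftrightarrow>
     A = hermite_quartic a1 a2 (2 / Ca1) (2 / Ca2) (coeff A 4) \<and>
     B = hermite_quartic b1 b2 (- 2 / Cb1) (- 2 / Cb2) (coeff B 4) \<and>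
     coeff A 4 = - coeff B 4 \<and> coeff A 3 = - coeff B 3 \<and> coeff A 2 = - coeff B 2"
  using hermite_quartic_iff[OF assms(1), of A] hermite_quartic_iff[OF assms(2), of B]
  unfolding AB_conditions_def by auto

lemma AB_conditions_solution:
  fixes a1 a2 b1 b2 Ca1 Ca2 Cb1 Cb2 :: real
  assumes "a1 \<noteq> a2" "b1 \<noteq> b2" "a1 + a2 \<noteq> b1 + b2"
  defines "s \<equiv> shared_leading_coeff a1 a2 b1 b2 Ca1 Ca2 Cb1 Cb2"
  shows "AB_conditions a1 a2 b1 b2 Ca1 Ca2 Cb1 Cb2 A B \<longleftrightarrow>
     A = hermite_quartic a1 a2 (2 / Ca1) (2 / Ca2) s \<and>
     B = hermite_quartic b1 b2 (- 2 / Cb1) (- 2 / Cb2) (- s) \<and>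
     compatibility_defect a1 a2 b1 b2 Ca1 Ca2 Cb1 Cb2 = 0"
proof -
  define HA HB where H: "HA = hermite_quartic a1 a2 (2 / Ca1) (2 / Ca2)"
    "HB = hermite_quartic b1 b2 (- 2 / Cb1) (- 2 / Cb2)"
  have "AB_conditions a1 a2 b1 b2 Ca1 Ca2 Cb1 Cb2 A B \<longleftrightarrow>
      (\<exists>t. A = HA t \<and> B = HB (- t) \<and>
           coeff (HA t) 3 = - coeff (HB (- t)) 3 \<and> coeff (HA t) 2 = - coeff (HB (- t)) 2)"
    unfolding AB_conditions_hermite[OF assms(1,2)] H
    by (metis hermite_quartic_coeffs(2) minus_minus)
  also have "\<dots> \<longleftrightarrow> (\<exists>t. A = HA t \<and> B = HB (- t) \<and> t = s \<and> coeff (HA t) 2 = - coeff (HB (- t)) 2)"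
    unfolding H s_def shared_leading_coeff_def matching_cubic_coeff[OF assms(3)] ..
  also have "\<dots> \<longleftrightarrow> A = HA s \<and> B = HB (- s) \<and> compatibility_defect a1 a2 b1 b2 Ca1 Ca2 Cb1 Cb2 = 0"
    using matching_quadratic_coeff[OF assms(3)] unfolding H s_def by auto
  finally show ?thesis unfolding H .
qed

lemma shared_leading_coeff_eq_0_iff:
  fixes a1 a2 b1 b2 Ca1 Ca2 Cb1 Cb2 :: real
  assumes "a1 + a2 \<noteq> b1 + b2"
  shows "shared_leading_coeff a1 a2 b1 b2 Ca1 Ca2 Cb1 Cb2 = 0 \<longleftrightarrow>
    1 / (a2 - a1)^2 * (1 / Ca1 + 1 / Ca2) = 1 / (b2 - b1)^2 * (1 / Cb1 + 1 / Cb2)"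
proof -
  have "hermite_slope a1 a2 (2 / Ca1) (2 / Ca2) = 2 * (1 / (a2 - a1)^2 * (1 / Ca1 + 1 / Ca2))"
    "hermite_slope b1 b2 (- 2 / Cb1) (- 2 / Cb2) = - 2 * (1 / (b2 - b1)^2 * (1 / Cb1 + 1 / Cb2))"
    unfolding hermite_slope_def by simp_all
  moreover have "2 * ((a1 + a2) - (b1 + b2)) \<noteq> 0" using assms by simp
  ultimately show ?thesis
    unfolding shared_leading_coeff_def divide_eq_0_iff by argo
qed

lemma linear_coeffs_match_iff:
  fixes a1 a2 b1 b2 Ca1 Ca2 Cb1 Cb2 :: real
  shows "coeff (hermite_quartic a1 a2 (2 / Ca1) (2 / Ca2) 0) 1
           = - coeff (hermite_quartic b1 b2 (- 2 / Cb1) (- 2 / Cb2) 0) 1 \<longleftrightarrow>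
    1 / (a2 - a1)^2 * (a2 * (2 * a1 + a2) / Ca1 + a1 * (2 * a2 + a1) / Ca2)
      = 1 / (b2 - b1)^2 * (b2 * (2 * b1 + b2) / Cb1 + b1 * (2 * b2 + b1) / Cb2)"
proof -
  have "coeff (hermite_quartic a1 a2 (2 / Ca1) (2 / Ca2) 0) 1
      = 2 * (1 / (a2 - a1)^2 * (a2 * (2 * a1 + a2) / Ca1 + a1 * (2 * a2 + a1) / Ca2))"
    "coeff (hermite_quartic b1 b2 (- 2 / Cb1) (- 2 / Cb2) 0) 1
      = - 2 * (1 / (b2 - b1)^2 * (b2 * (2 * b1 + b2) / Cb1 + b1 * (2 * b2 + b1) / Cb2))"
    unfolding hermite_quartic_linear_coeff by (simp_all add: field_simps)
  then show ?thesis by argo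
qed

theorem mainTheorem7:
  fixes a1 a2 b1 b2 Ca1 Ca2 Cb1 Cb2 :: real
  assumes "b1 < b2" "b2 < a1" "a1 < a2"
    and "Ca1 \<noteq> 0" "Ca2 \<noteq> 0" "Cb1 \<noteq> 0" "Cb2 \<noteq> 0"
  defines "E \<equiv>
      ((a1 + a2)^2 + 2 * a2^2 + (b1 + b2)^2 + 2 * b1 * b2 - 2 * (2 * a2 + a1) * (b1 + b2))
        / ((a2 - a1)^2 * Ca1)
    + ((a1 + a2)^2 + 2 * a1^2 + (b1 + b2)^2 + 2 * b1 * b2 - 2 * (2 * a1 + a2) * (b1 + b2))
        / ((a2 - a1)^2 * Ca2)
    + ((b1 + b2)^2 + 2 * b2^2 + (a1 + a2)^2 + 2 * a1 * a2 - 2 * (2 * b2 + b1) * (a1 + a2))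
        / ((b2 - b1)^2 * Cb1)
    + ((b1 + b2)^2 + 2 * b1^2 + (a1 + a2)^2 + 2 * a1 * a2 - 2 * (2 * b1 + b2) * (a1 + a2))
        / ((b2 - b1)^2 * Cb2)"
    and "F \<equiv> 1 / (a2 - a1)^2 * (1 / Ca1 + 1 / Ca2) = 1 / (b2 - b1)^2 * (1 / Cb1 + 1 / Cb2)"
    and "G \<equiv> 1 / (a2 - a1)^2 * (a2 * (2 * a1 + a2) / Ca1 + a1 * (2 * a2 + a1) / Ca2)
              = 1 / (b2 - b1)^2 * (b2 * (2 * b1 + b2) / Cb1 + b1 * (2 * b2 + b1) / Cb2)"
  shows "((\<exists>A B. AB_conditions a1 a2 b1 b2 Ca1 Ca2 Cb1 Cb2 A B) \<longleftrightarrow> E = 0)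
    \<and> (E = 0 \<longrightarrow> (\<exists>!AB. AB_conditions a1 a2 b1 b2 Ca1 Ca2 Cb1 Cb2 (fst AB) (snd AB)))
    \<and> (\<forall>A B. AB_conditions a1 a2 b1 b2 Ca1 Ca2 Cb1 Cb2 A B \<longrightarrow> (coeff A 4 = 0 \<longleftrightarrow> F))
    \<and> (\<forall>A B. AB_conditions a1 a2 b1 b2 Ca1 Ca2 Cb1 Cb2 A B \<longrightarrow> F \<longrightarrow> G \<longrightarrow>
          coeff A 4 = 0 \<and> coeff A 1 = - coeff B 1)"
proof -
  have distinct: "a1 \<noteq> a2" "b1 \<noteq> b2" "a1 + a2 \<noteq> b1 + b2"
    using assms(1-3) by auto
  define s where "s = shared_leading_coeff a1 a2 b1 b2 Ca1 Ca2 Cb1 Cb2"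
  define PA PB where P: "PA = hermite_quartic a1 a2 (2 / Ca1) (2 / Ca2) s"
    "PB = hermite_quartic b1 b2 (- 2 / Cb1) (- 2 / Cb2) (- s)"
  have "E = compatibility_defect a1 a2 b1 b2 Ca1 Ca2 Cb1 Cb2"
    unfolding E_def compatibility_defect_def ..
  then have solution: "AB_conditions a1 a2 b1 b2 Ca1 Ca2 Cb1 Cb2 A B \<longleftrightarrow> A = PA \<and> B = PB \<and> E = 0"
    for A B using AB_conditions_solution[OF distinct] unfolding s_def P by simp
  have leading: "coeff PA 4 = 0 \<longleftrightarrow> F"
    unfolding P hermite_quartic_coeffs(2) s_def F_def by (rule shared_leading_coeff_eq_0_iff[OF distinct(3)])
  have linear: "coeff PA 1 = - coeff PB 1 \<longleftrightarrow> G" if F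
  proof -
    have "s = 0" using leading that unfolding P hermite_quartic_coeffs(2) by simp
    show ?thesis
      unfolding P G_def \<open>s = 0\<close> minus_zero by (rule linear_coeffs_match_iff)
  qed
  show ?thesis
  proof (intro conjI allI impI)
    show "(\<exists>A B. AB_conditions a1 a2 b1 b2 Ca1 Ca2 Cb1 Cb2 A B) \<longleftrightarrow> E = 0"
      unfolding solution by blast
    show "\<exists>!AB. AB_conditions a1 a2 b1 b2 Ca1 Ca2 Cb1 Cb2 (fst AB) (snd AB)" if "E = 0"
      unfolding solution using that by (intro ex1I[of _ "(PA, PB)"]) (auto simp: prod_eq_iff)
  next
    fix A B assume "AB_conditions a1 a2 b1 b2 Ca1 Ca2 Cb1 Cb2 A B"
    then show "coeff A 4 = 0 \<longleftrightarrow> F"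
      unfolding solution using leading by simp
  next
    fix A B assume "AB_conditions a1 a2 b1 b2 Ca1 Ca2 Cb1 Cb2 A B" F G
    then show "coeff A 4 = 0" "coeff A 1 = - coeff B 1"
      unfolding solution using leading linear by simp_all
  qed
qed

end
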